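(* Let $n\ge1$ be an integer, $\alpha>0$, $M=\mathbb{R}^n\setminus\{0\}$ with measure $d\mu=e^{-1/|x|^\alpha}dx$, and $B_r=\{x\in M:|x|<r\}$. There exists a constant $C>0$ such that $\lambda_1(B_r)\le Cr^{-2(1+\alpha)}$ for all $0<r<1$, and $\lambda_1(B_r)\le Cr^{-2}$ for all $r\ge1$.
   Context: For an open set $U\subset M$, $\lambda_1(U)$ denotes the bottom of the spectrum of the operator $\mathcal{L}=\Delta-\nabla(|x|^{-\alpha})\cdot\nabla$ in $L^2(U,\mu)$ with Dirichlet boundary condition on $\partial U$; equivalently $\lambda_1(U)=\inf\frac{\int_U|\nabla\varphi|^2d\mu}{\int_U\varphi^2d\mu}$ over non-zero Lipschitz functions $\varphi$ with compact support in $U$. *)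

theory Defs
  imports "HOL-Analysis.Analysis"
begin

text \<open>Weighted measure d mu = exp(-1/|x|^alpha) dx on R^n minus the origin
  (the origin is given density 0; it is a Lebesgue null set anyway).\<close>
definition mu :: "real \<Rightarrow> ('a::euclidean_space) measure" where
  "mu \<alpha> = density lborel
     (\<lambda>x. if x = 0 then 0 else ennreal (exp (- (1 / (norm x powr \<alpha>)))))"

text \<open>Gradient of a real function (where it is differentiable; Lipschitz
  functions are differentiable almost everywhere).\<close>
definition grad :: "('a::euclidean_space \<Rightarrow> real) \<Rightarrow> 'a \<Rightarrow> 'a" where
  "grad \<phi> x = (if \<phi> differentiable (at x)
      then (\<Sum>b\<in>Basis. frechet_derivative \<phi> (at x) b *\<^sub>R b) else 0)"

definition test_fun :: "'a::euclidean_space set \<Rightarrow> ('a \<Rightarrow> real) \<Rightarrow> bool" where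
  "test_fun U \<phi> \<longleftrightarrow> (\<exists>L. L-lipschitz_on UNIV \<phi>)
     \<and> compact (closure {x. \<phi> x \<noteq> 0}) \<and> closure {x. \<phi> x \<noteq> 0} \<subseteq> U
     \<and> (\<exists>x. \<phi> x \<noteq> 0)"

definition rayleigh :: "real \<Rightarrow> ('a::euclidean_space \<Rightarrow> real) \<Rightarrow> real" where
  "rayleigh \<alpha> \<phi> = (\<integral>x. (norm (grad \<phi> x))\<^sup>2 \<partial>(mu \<alpha>)) / (\<integral>x. (\<phi> x)\<^sup>2 \<partial>(mu \<alpha>))"

definition lambda1 :: "real \<Rightarrow> 'a::euclidean_space set \<Rightarrow> real" where
  "lambda1 \<alpha> U = Inf (rayleigh \<alpha> ` {\<phi>. test_fun U \<phi>})"

definition Bpunct :: "real \<Rightarrow> 'a::real_normed_vector set" where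
  "Bpunct r = {x. x \<noteq> 0 \<and> norm x < r}"

end

theory Submission
  imports Defs
begin

text \<open>The test function is a tent of radius \<open>w\<close> whose centre lies at distance \<open>r/2 + w\<close>
  from the origin. Its gradient has norm at most 1 and vanishes off its support, while the tent is at
  least \<open>w/2\<close> on the concentric ball of radius \<open>w/2\<close>; hence its Rayleigh quotient is at most
  \<open>4 * 2^n / w^2\<close> times the ratio of the largest to the smallest value of the weight
  \<open>exp (-1/|x|^\<alpha>)\<close> on the support. Taking \<open>w\<close> comparable to \<open>min r (r^(1+\<alpha>) / \<alpha>)\<close> keeps
  that ratio below \<open>e\<close>, so \<open>\<lambda>\<^sub>1(B\<^sub>r)\<close> is of order at most \<open>r^-2 + r^(-2(1+\<alpha>))\<close>,
  and one of the two terms dominates in each of the ranges \<open>r < 1\<close> and \<open>r \<ge> 1\<close>.\<close>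

lemma has_derivative_lipschitz_bound:
  fixes f :: "'a::real_normed_vector \<Rightarrow> real"
  assumes D: "(f has_derivative D) (at x)" and f: "L-lipschitz_on UNIV f"
  shows "\<bar>D v\<bar> \<le> L * norm v"
proof -
  define g where "g t = f (x + t *\<^sub>R v)" for t :: real
  have "(g has_derivative (\<lambda>t. D (t *\<^sub>R v))) (at 0)"
    unfolding g_def using D
    by (auto intro!: derivative_eq_intros has_derivative_compose[of "\<lambda>t. x + t *\<^sub>R v" _ _ _ f])
  moreover have "D (t *\<^sub>R v) = D v * t" for t
    using linear_scale[OF has_derivative_linear[OF D]] by simp
  ultimately have "(g has_real_derivative D v) (at 0)"
    by (simp add: has_field_derivative_def)
  then have "((\<lambda>h. \<bar>(g h - g 0) / h\<bar>) \<longlongrightarrow> \<bar>D v\<bar>) (at 0)"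
    unfolding DERIV_def by (intro tendsto_rabs) simp
  moreover have "\<bar>(g h - g 0) / h\<bar> \<le> L * norm v" if "h \<noteq> 0" for h
  proof -
    have "\<bar>g h - g 0\<bar> \<le> L * (\<bar>h\<bar> * norm v)"
      using lipschitz_onD[OF f, of "x + h *\<^sub>R v" x] by (simp add: g_def dist_real_def dist_norm)
    then show ?thesis using that by (simp add: divide_le_eq mult_ac)
  qed
  ultimately show ?thesis
    by (intro tendsto_upperbound[of _ _ "at (0::real)"]) (auto simp: eventually_at_filter)
qed

lemma norm_grad_le_lipschitz:
  fixes f :: "'a::euclidean_space \<Rightarrow> real"
  assumes f: "L-lipschitz_on UNIV f"
  shows "norm (grad f x) \<le> L"
proof (cases "f differentiable (at x)")
  case False
  then show ?thesis using lipschitz_on_nonneg[OF f] by (simp add: grad_def)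
next
  case True
  define D where "D = frechet_derivative f (at x)"
  have D: "(f has_derivative D) (at x)" using True frechet_derivative_works D_def by blast
  define g where "g = grad f x"
  have "g = (\<Sum>b\<in>Basis. D b *\<^sub>R b)" using True by (simp add: g_def grad_def D_def)
  then have "inner g b = D b" if "b \<in> Basis" for b using that by simp
  moreover have "D g = (\<Sum>b\<in>Basis. inner g b * D b)"
  proof -
    have "D g = D (\<Sum>b\<in>Basis. inner g b *\<^sub>R b)" by (simp add: euclidean_representation)
    also have "\<dots> = (\<Sum>b\<in>Basis. inner g b * D b)"
      using has_derivative_linear[OF D] by (simp add: linear_sum linear_scale)
    finally show ?thesis .
  qed
  ultimately have "D g = inner g g" by (simp add: euclidean_inner[of g g])
  then have "(norm g)\<^sup>2 \<le> L * norm g"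
    using has_derivative_lipschitz_bound[OF D f, of g] by (simp add: power2_norm_eq_inner)
  then show ?thesis
    unfolding g_def[symmetric] using lipschitz_on_nonneg[OF f]
    by (cases "norm g = 0") (auto simp: power2_eq_square)
qed

lemma grad_eq_0_if_locally_0:
  fixes f :: "'a::euclidean_space \<Rightarrow> real"
  assumes "open S" "x \<in> S" "\<And>y. y \<in> S \<Longrightarrow> f y = 0"
  shows "grad f x = 0"
proof -
  have D: "(f has_derivative (\<lambda>h. 0)) (at x)"
    by (rule has_derivative_transform_within_open[of "\<lambda>y. 0", OF _ assms(1,2)]) (use assms(3) in auto)
  then have "frechet_derivative f (at x) = (\<lambda>h. 0)"
    by (simp add: frechet_derivative_at[symmetric])
  with D show ?thesis by (auto simp: grad_def differentiable_def)
qed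

lemma sets_mu [simp, measurable_cong]: "sets (mu \<alpha> :: 'a::euclidean_space measure) = sets borel"
  by (simp add: mu_def)

lemma exp_neg_inverse_powr_mono:
  fixes s t \<alpha> :: real
  assumes "0 < s" "s \<le> t" "0 \<le> \<alpha>"
  shows "exp (- (1 / s powr \<alpha>)) \<le> exp (- (1 / t powr \<alpha>))"
  using assms by (simp add: frac_le powr_mono2)

lemma emeasure_mu_annulus:
  fixes A :: "'a::euclidean_space set"
  assumes A: "A \<in> sets borel" and "0 < a" "0 \<le> \<alpha>"
    and annulus: "\<And>x. x \<in> A \<Longrightarrow> a \<le> norm x \<and> norm x \<le> R"
  shows "ennreal (exp (- (1 / a powr \<alpha>))) * emeasure lborel A \<le> emeasure (mu \<alpha>) A"
    and "emeasure (mu \<alpha>) A \<le> ennreal (exp (- (1 / R powr \<alpha>))) * emeasure lborel A"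
proof -
  define \<rho> :: "'a \<Rightarrow> ennreal" where
    "\<rho> x = (if x = 0 then 0 else ennreal (exp (- (1 / (norm x powr \<alpha>)))))" for x
  have "\<rho> \<in> borel_measurable borel" unfolding \<rho>_def by measurable
  then have \<mu>: "emeasure (mu \<alpha>) A = (\<integral>\<^sup>+x. \<rho> x * indicator A x \<partial>lborel)"
    using A by (simp add: mu_def \<rho>_def[abs_def] emeasure_density)
  have bounds: "exp (- (1 / a powr \<alpha>)) \<le> \<rho> x \<and> \<rho> x \<le> exp (- (1 / R powr \<alpha>))" if "x \<in> A" for x
    using annulus[OF that] assms(2,3) exp_neg_inverse_powr_mono[of a "norm x" \<alpha>]
      exp_neg_inverse_powr_mono[of "norm x" R \<alpha>]
    by (auto simp: \<rho>_def simp del: exp_le_cancel_iff intro!: ennreal_leI)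
  have "ennreal (exp (- (1 / a powr \<alpha>))) * emeasure lborel A
      = (\<integral>\<^sup>+x. ennreal (exp (- (1 / a powr \<alpha>))) * indicator A x \<partial>lborel)"
    using A by (simp add: nn_integral_cmult_indicator)
  also have "\<dots> \<le> emeasure (mu \<alpha>) A"
    unfolding \<mu> using bounds by (intro nn_integral_mono) (simp split: split_indicator)
  finally show "ennreal (exp (- (1 / a powr \<alpha>))) * emeasure lborel A \<le> emeasure (mu \<alpha>) A" .
  have "emeasure (mu \<alpha>) A \<le> (\<integral>\<^sup>+x. ennreal (exp (- (1 / R powr \<alpha>))) * indicator A x \<partial>lborel)"
    unfolding \<mu> using bounds by (intro nn_integral_mono) (simp split: split_indicator)
  also have "\<dots> = ennreal (exp (- (1 / R powr \<alpha>))) * emeasure lborel A"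
    using A by (simp add: nn_integral_cmult_indicator)
  finally show "emeasure (mu \<alpha>) A \<le> ennreal (exp (- (1 / R powr \<alpha>))) * emeasure lborel A" .
qed

lemma measure_mu_annulus:
  fixes A :: "'a::euclidean_space set"
  assumes A: "A \<in> sets borel" "emeasure lborel A < \<infinity>" and "0 < a" "0 \<le> \<alpha>"
    and annulus: "\<And>x. x \<in> A \<Longrightarrow> a \<le> norm x \<and> norm x \<le> R"
  shows "emeasure (mu \<alpha>) A < \<infinity>"
    and "exp (- (1 / a powr \<alpha>)) * measure lborel A \<le> measure (mu \<alpha>) A"
    and "measure (mu \<alpha>) A \<le> exp (- (1 / R powr \<alpha>)) * measure lborel A"
proof -
  note lower = emeasure_mu_annulus(1)[OF A(1) assms(3,4) annulus]
  note upper = emeasure_mu_annulus(2)[OF A(1) assms(3,4) annulus]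
  have lborel: "emeasure lborel A = ennreal (measure lborel A)"
    using A(2) by (simp add: emeasure_eq_ennreal_measure)
  show fin: "emeasure (mu \<alpha>) A < \<infinity>"
    using upper lborel by (simp add: ennreal_mult[symmetric] le_less_trans)
  then have \<mu>: "emeasure (mu \<alpha>) A = ennreal (measure (mu \<alpha>) A)"
    by (simp add: emeasure_eq_ennreal_measure)
  show "exp (- (1 / a powr \<alpha>)) * measure lborel A \<le> measure (mu \<alpha>) A"
    using lower unfolding lborel \<mu> by (simp add: ennreal_mult[symmetric] ennreal_le_iff)
  show "measure (mu \<alpha>) A \<le> exp (- (1 / R powr \<alpha>)) * measure lborel A"
    using upper unfolding lborel \<mu> by (simp add: ennreal_mult[symmetric] ennreal_le_iff)
qed

lemma integral_norm_grad_sq_le: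
  fixes f :: "'a::euclidean_space \<Rightarrow> real"
  assumes f: "L-lipschitz_on UNIV f" and S: "closed S" "S \<in> sets M" "emeasure M S < \<infinity>"
    and vanish: "\<And>x. x \<notin> S \<Longrightarrow> f x = 0"
  shows "(\<integral>x. (norm (grad f x))\<^sup>2 \<partial>M) \<le> L\<^sup>2 * measure M S"
proof (cases "integrable M (\<lambda>x. (norm (grad f x))\<^sup>2)")
  case True
  have "(norm (grad f x))\<^sup>2 \<le> L\<^sup>2 * indicator S x" for x
  proof (cases "x \<in> S")
    case True
    then show ?thesis
      using norm_grad_le_lipschitz[OF f, of x] by (simp add: power_mono)
  next
    case False
    then have "grad f x = 0"
      using S(1) vanish by (intro grad_eq_0_if_locally_0[of "- S"]) auto
    then show ?thesis by simp
  qed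
  then have "(\<integral>x. (norm (grad f x))\<^sup>2 \<partial>M) \<le> (\<integral>x. L\<^sup>2 * indicator S x \<partial>M)"
    using S(2,3) True by (intro integral_mono integrable_mult_right integrable_real_indicator) auto
  then show ?thesis using S(2) by simp
next
  case False
  then show ?thesis by (simp add: not_integrable_integral_eq)
qed

definition tent :: "real \<Rightarrow> 'a::metric_space \<Rightarrow> 'a \<Rightarrow> real" where
  "tent w c x = max 0 (w - dist x c)"

lemma lipschitz_tent: "1-lipschitz_on UNIV (tent w c)"
proof (rule lipschitz_onI)
  fix y z
  have "dist y c \<le> dist y z + dist z c" "dist z c \<le> dist y z + dist y c"
    using dist_triangle[of y c z] dist_triangle[of z c y] by (simp_all add: dist_commute)
  then show "dist (tent w c y) (tent w c z) \<le> 1 * dist y z"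
    by (simp add: tent_def dist_real_def max_def abs_le_iff)
qed simp

lemma tent_eq_0_iff: "tent w c x = 0 \<longleftrightarrow> x \<notin> ball c w"
  by (auto simp: tent_def max_def dist_commute)

lemma integral_tent_sq_ge:
  fixes c :: "'a::euclidean_space"
  assumes M: "sets M = sets borel" "emeasure M (cball c w) < \<infinity>"
  shows "(w / 2)\<^sup>2 * measure M (cball c (w / 2)) \<le> (\<integral>x. (tent w c x)\<^sup>2 \<partial>M)"
proof -
  have "cball c (w / 2) \<subseteq> cball c w"
  proof
    fix x assume "x \<in> cball c (w / 2)"
    then show "x \<in> cball c w" using zero_le_dist[of c x] by (simp del: zero_le_dist)
  qed
  then have fin: "emeasure M (cball c (w / 2)) < \<infinity>"
    using M emeasure_mono[of "cball c (w / 2)" "cball c w" M] by (simp add: le_less_trans)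
  have tent_sq: "(w / 2)\<^sup>2 * indicator (cball c (w / 2)) x \<le> (tent w c x)\<^sup>2
      \<and> (tent w c x)\<^sup>2 \<le> w\<^sup>2 * indicator (cball c w) x" for x
  proof -
    have "0 \<le> tent w c x" "tent w c x \<le> w" if "x \<in> cball c w"
      using that zero_le_dist[of x c] by (auto simp: tent_def dist_commute)
    moreover have "w / 2 \<le> tent w c x" if "x \<in> cball c (w / 2)"
      using that by (simp add: tent_def dist_commute le_max_iff_disj)
    moreover have "tent w c x = 0" if "x \<notin> cball c w"
      using that by (auto simp: tent_def dist_commute)
    ultimately show ?thesis
      using \<open>cball c (w / 2) \<subseteq> cball c w\<close> zero_le_dist[of c x]
      by (auto simp: indicator_def power_mono simp del: zero_le_dist)
  qed
  have "integrable M (\<lambda>x. w\<^sup>2 * indicator (cball c w) x)"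
    using M by (intro integrable_mult_right integrable_real_indicator) auto
  moreover have "(\<lambda>x. (tent w c x)\<^sup>2) \<in> borel_measurable M"
    unfolding measurable_cong_sets[OF M(1) refl] tent_def by measurable
  ultimately have "integrable M (\<lambda>x. (tent w c x)\<^sup>2)"
  proof (rule Bochner_Integration.integrable_bound)
    show "AE x in M. norm ((tent w c x)\<^sup>2) \<le> norm (w\<^sup>2 * indicator (cball c w) x)"
      using tent_sq by (intro AE_I2) (simp add: abs_mult)
  qed
  then have "(\<integral>x. (w / 2)\<^sup>2 * indicator (cball c (w / 2)) x \<partial>M) \<le> (\<integral>x. (tent w c x)\<^sup>2 \<partial>M)"
    using M fin tent_sq by (intro integral_mono integrable_mult_right integrable_real_indicator) auto
  then show ?thesis using M by simp
qed

lemma norm_bounds_in_cball: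
  fixes c :: "'a::real_normed_vector"
  assumes "norm c = a + w" "x \<in> cball c r" "r \<le> w"
  shows "a \<le> norm x \<and> norm x \<le> a + 2 * w"
  using assms norm_triangle_ineq2[of c x] norm_triangle_ineq2[of x c]
  by (auto simp: dist_norm norm_minus_commute)

lemma rayleigh_tent_le:
  fixes c :: "'a::euclidean_space"
  assumes "0 \<le> \<alpha>" "0 < a" "0 < w" and c: "norm c = a + w"
  shows "rayleigh \<alpha> (tent w c)
    \<le> 4 * 2 ^ DIM('a) / w\<^sup>2 * exp (1 / a powr \<alpha> - 1 / (a + 2 * w) powr \<alpha>)"
proof -
  define n where "n = DIM('a)"
  define K where "K = measure lborel (ball (0::'a) 1)"
  define E0 where "E0 = exp (- (1 / a powr \<alpha>))"
  define E1 where "E1 = exp (- (1 / (a + 2 * w) powr \<alpha>))"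
  have K: "K > 0" unfolding K_def using content_ball_pos[of 1 "0::'a"] by simp
  have volume: "measure lborel (cball c r) = r ^ n * K" if "0 \<le> r" for r
    using content_cball_conv_ball[of c r] content_ball_conv_unit_ball[OF that, of c]
    by (simp add: n_def K_def)
  have measure_mu: "emeasure (mu \<alpha>) (cball c r) < \<infinity>"
      "E0 * measure lborel (cball c r) \<le> measure (mu \<alpha>) (cball c r)"
      "measure (mu \<alpha>) (cball c r) \<le> E1 * measure lborel (cball c r)" if "r \<le> w" for r
    using measure_mu_annulus[OF _ emeasure_lborel_cball_finite \<open>0 < a\<close> \<open>0 \<le> \<alpha>\<close> norm_bounds_in_cball[OF c _ that]]
    by (simp_all add: E0_def E1_def)
  have "(\<integral>x. (norm (grad (tent w c) x))\<^sup>2 \<partial>mu \<alpha>) \<le> 1\<^sup>2 * measure (mu \<alpha>) (cball c w)"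
    using measure_mu(1)[of w] lipschitz_tent[of w c]
    by (intro integral_norm_grad_sq_le) (auto simp: tent_eq_0_iff)
  also have "\<dots> \<le> E1 * (w ^ n * K)"
    using measure_mu(3)[of w] volume[of w] \<open>0 < w\<close> by simp
  finally have numerator: "(\<integral>x. (norm (grad (tent w c) x))\<^sup>2 \<partial>mu \<alpha>) \<le> E1 * (w ^ n * K)" .
  have "(w / 2)\<^sup>2 * (E0 * ((w / 2) ^ n * K)) \<le> (w / 2)\<^sup>2 * measure (mu \<alpha>) (cball c (w / 2))"
    using measure_mu(2)[of "w / 2"] volume[of "w / 2"] \<open>0 < w\<close>
    by (intro mult_left_mono) simp_all
  also have "\<dots> \<le> (\<integral>x. (tent w c x)\<^sup>2 \<partial>mu \<alpha>)"
    using measure_mu(1)[of w] by (intro integral_tent_sq_ge) simp_all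
  finally have denominator: "(w / 2)\<^sup>2 * (E0 * ((w / 2) ^ n * K)) \<le> (\<integral>x. (tent w c x)\<^sup>2 \<partial>mu \<alpha>)" .
  have "rayleigh \<alpha> (tent w c) \<le> E1 * (w ^ n * K) / ((w / 2)\<^sup>2 * (E0 * ((w / 2) ^ n * K)))"
    unfolding rayleigh_def using numerator denominator K \<open>0 < w\<close>
    by (intro frac_le integral_nonneg_AE) (simp_all add: E0_def E1_def)
  also have "\<dots> = 4 * 2 ^ n / w\<^sup>2 * (E1 / E0)"
    using K \<open>0 < w\<close> by (simp add: E0_def power_divide field_simps)
  also have "E1 / E0 = exp (1 / a powr \<alpha> - 1 / (a + 2 * w) powr \<alpha>)"
    by (simp add: E0_def E1_def exp_diff[symmetric])
  finally show ?thesis by (simp add: n_def)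
qed

lemma inverse_powr_diff_le:
  fixes a b \<alpha> :: real
  assumes "0 < a" "a \<le> b" "0 \<le> \<alpha>"
  shows "1 / a powr \<alpha> - 1 / b powr \<alpha> \<le> \<alpha> * (b - a) / a powr (1 + \<alpha>)"
proof -
  define x where "x = b / a"
  have x: "1 \<le> x" using assms by (simp add: x_def)
  have "1 - \<alpha> * ln x \<le> x powr (- \<alpha>)"
    using exp_ge_add_one_self[of "- \<alpha> * ln x"] x by (simp add: powr_def)
  moreover have "\<alpha> * ln x \<le> \<alpha> * (x - 1)"
    using x assms(3) ln_le_minus_one[of x] by (intro mult_left_mono) auto
  ultimately have "1 - x powr (- \<alpha>) \<le> \<alpha> * (x - 1)" by linarith
  have "1 / b powr \<alpha> = 1 / a powr \<alpha> * x powr (- \<alpha>)"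
  proof -
    have "b = a * x" using assms(1) by (simp add: x_def)
    then show ?thesis using assms(1) x by (simp add: powr_mult powr_minus divide_inverse)
  qed
  then have "1 / a powr \<alpha> - 1 / b powr \<alpha> = 1 / a powr \<alpha> * (1 - x powr (- \<alpha>))"
    by (simp add: algebra_simps)
  also have "\<dots> \<le> 1 / a powr \<alpha> * (\<alpha> * (x - 1))"
    using \<open>1 - x powr (- \<alpha>) \<le> \<alpha> * (x - 1)\<close> by (intro mult_left_mono) auto
  also have "\<dots> = \<alpha> * (b - a) / (a * a powr \<alpha>)"
    using assms(1) by (simp add: x_def field_simps)
  finally show ?thesis using assms(1) by (simp add: powr_mult_base)
qed

lemma inverse_powr_diff_le_1:
  fixes a b \<alpha> :: real
  assumes "0 < a" "a \<le> b" "0 \<le> \<alpha>" "\<alpha> * (b - a) \<le> a powr (1 + \<alpha>)"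
  shows "1 / a powr \<alpha> - 1 / b powr \<alpha> \<le> 1"
proof -
  have "\<alpha> * (b - a) / a powr (1 + \<alpha>) \<le> 1"
    using assms(1,4) by (simp add: divide_le_eq)
  then show ?thesis using inverse_powr_diff_le[OF assms(1-3)] by linarith
qed

lemma inverse_square_min_le:
  fixes x y :: real
  assumes "0 < x" "0 < y"
  shows "1 / (min x y)\<^sup>2 \<le> 1 / x\<^sup>2 + 1 / y\<^sup>2"
  using assms by (simp add: min_def)

lemma inverse_square_half_powr:
  fixes r \<alpha> :: real
  assumes "0 < \<alpha>" "0 < r"
  shows "1 / ((r / 2) powr (1 + \<alpha>) / (2 * \<alpha>))\<^sup>2
    = 4 * \<alpha>\<^sup>2 * 2 powr (2 + 2 * \<alpha>) * r powr (- 2 * (1 + \<alpha>))"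
proof -
  have "((r / 2) powr (1 + \<alpha>))\<^sup>2 = r powr (2 + 2 * \<alpha>) / 2 powr (2 + 2 * \<alpha>)"
    using assms(2) by (simp add: power2_eq_square powr_add[symmetric] powr_divide)
  moreover have "r powr (- 2 * (1 + \<alpha>)) = 1 / r powr (2 + 2 * \<alpha>)"
    using powr_minus_divide[of r "2 + 2 * \<alpha>"] by (simp add: algebra_simps)
  ultimately show ?thesis
    using assms by (simp add: power_divide)
qed

lemma inverse_square_radius_le:
  fixes r \<alpha> :: real
  assumes "0 < \<alpha>" "0 < r"
  shows "1 / (min (r / 8) ((r / 2) powr (1 + \<alpha>) / (2 * \<alpha>)))\<^sup>2
    \<le> 64 * r powr (- 2) + 4 * \<alpha>\<^sup>2 * 2 powr (2 + 2 * \<alpha>) * r powr (- 2 * (1 + \<alpha>))"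
proof -
  have "1 / (r / 8)\<^sup>2 = 64 * r powr (- 2)"
    using assms(2) by (simp add: powr_minus power2_eq_square divide_simps)
  moreover have "1 / (min (r / 8) ((r / 2) powr (1 + \<alpha>) / (2 * \<alpha>)))\<^sup>2
      \<le> 1 / (r / 8)\<^sup>2 + 1 / ((r / 2) powr (1 + \<alpha>) / (2 * \<alpha>))\<^sup>2"
    using assms by (intro inverse_square_min_le) auto
  ultimately show ?thesis
    unfolding inverse_square_half_powr[OF assms] by linarith
qed

lemma lambda1_le_rayleigh: "test_fun U \<phi> \<Longrightarrow> lambda1 \<alpha> U \<le> rayleigh \<alpha> \<phi>"
  unfolding lambda1_def rayleigh_def
  by (rule cInf_lower) (auto intro!: bdd_belowI[where m = 0] divide_nonneg_nonneg integral_nonneg_AE)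

lemma test_fun_tent:
  fixes c :: "'a::euclidean_space"
  assumes "0 < w" "cball c w \<subseteq> U"
  shows "test_fun U (tent w c)"
proof -
  have "{x. tent w c x \<noteq> 0} = ball c w" by (auto simp: tent_eq_0_iff)
  then have "closure {x. tent w c x \<noteq> 0} = cball c w"
    using assms(1) by simp
  moreover have "tent w c c \<noteq> 0"
    using assms(1) by (simp add: tent_eq_0_iff)
  ultimately show ?thesis
    using assms(2) lipschitz_tent[of w c] by (auto simp: test_fun_def)
qed

lemma lambda1_Bpunct_le:
  fixes \<alpha> r :: real
  assumes "0 < \<alpha>" "0 < r"
  shows "lambda1 \<alpha> (Bpunct r :: 'a::euclidean_space set) \<le> 4 * 2 ^ DIM('a) * exp 1 *
    (64 * r powr (- 2) + 4 * \<alpha>\<^sup>2 * 2 powr (2 + 2 * \<alpha>) * r powr (- 2 * (1 + \<alpha>)))"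
proof -
  define a where "a = r / 2"
  define q where "q = a powr (1 + \<alpha>) / (2 * \<alpha>)"
  define w where "w = min (r / 8) q"
  \<comment> \<open>\<open>w \<le> r/8\<close> keeps the tent inside \<open>B\<^sub>r\<close>; \<open>w \<le> q\<close> keeps the weight ratio on its support below \<open>e\<close>.\<close>
  have a: "0 < a" and q: "0 < q" and w: "0 < w"
    using assms by (simp_all add: a_def q_def w_def)
  obtain e :: 'a where e: "norm e = 1"
    using norm_Basis SOME_Basis by blast
  define c where "c = (a + w) *\<^sub>R e"
  have c: "norm c = a + w" using a w e by (simp add: c_def)
  have "cball c w \<subseteq> Bpunct r"
  proof
    fix x assume "x \<in> cball c w"
    then have "a \<le> norm x \<and> norm x \<le> a + 2 * w"
      using norm_bounds_in_cball[OF c] by blast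
    moreover have "w \<le> r / 8" by (simp add: w_def)
    ultimately show "x \<in> Bpunct r" using a by (auto simp: Bpunct_def a_def)
  qed
  then have "lambda1 \<alpha> (Bpunct r :: 'a set) \<le> rayleigh \<alpha> (tent w c)"
    using w by (intro lambda1_le_rayleigh test_fun_tent)
  also have "\<dots> \<le> 4 * 2 ^ DIM('a) / w\<^sup>2 * exp (1 / a powr \<alpha> - 1 / (a + 2 * w) powr \<alpha>)"
    using assms(1) a w c by (intro rayleigh_tent_le) auto
  also have "\<dots> \<le> 4 * 2 ^ DIM('a) / w\<^sup>2 * exp 1"
  proof -
    have "\<alpha> * (a + 2 * w - a) \<le> \<alpha> * (2 * q)"
      using assms(1) by (intro mult_left_mono) (auto simp: w_def)
    also have "\<dots> = a powr (1 + \<alpha>)" using assms(1) by (simp add: q_def)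
    finally have "1 / a powr \<alpha> - 1 / (a + 2 * w) powr \<alpha> \<le> 1"
      using a w assms(1) by (intro inverse_powr_diff_le_1) auto
    then show ?thesis by (intro mult_left_mono) auto
  qed
  also have "\<dots> \<le> 4 * 2 ^ DIM('a) * (64 * r powr (- 2) + 4 * \<alpha>\<^sup>2 * 2 powr (2 + 2 * \<alpha>) * r powr (- 2 * (1 + \<alpha>))) * exp 1"
  proof -
    have "1 / w\<^sup>2 \<le> 64 * r powr (- 2) + 4 * \<alpha>\<^sup>2 * 2 powr (2 + 2 * \<alpha>) * r powr (- 2 * (1 + \<alpha>))"
      using inverse_square_radius_le[OF assms] by (simp only: w_def q_def a_def)
    then show ?thesis by (simp add: divide_inverse mult_right_mono)
  qed
  finally show ?thesis by (simp only: mult_ac)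
qed

theorem lemma7p2:
  fixes \<alpha> :: real
  assumes "\<alpha> > 0"
  shows "\<exists>C>0.
    (\<forall>r. 0 < r \<and> r < 1 \<longrightarrow>
        lambda1 \<alpha> (Bpunct r :: (real ^ 'n) set) \<le> C * r powr (- 2 * (1 + \<alpha>)))
  \<and> (\<forall>r\<ge>1. lambda1 \<alpha> (Bpunct r :: (real ^ 'n) set) \<le> C * r powr (- 2))"
proof -
  define K :: real where "K = 4 * 2 ^ DIM(real ^ 'n) * exp 1"
  define B where "B = 4 * \<alpha>\<^sup>2 * 2 powr (2 + 2 * \<alpha>)"
  have "0 < K" "0 \<le> B" by (simp_all add: K_def B_def)
  have bound: "lambda1 \<alpha> (Bpunct r :: (real ^ 'n) set)
      \<le> K * (64 * r powr (- 2) + B * r powr (- 2 * (1 + \<alpha>)))" if "0 < r" for r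
    using lambda1_Bpunct_le[OF assms that, where 'a = "real ^ 'n"] by (simp add: K_def B_def)
  have "64 * r powr (- 2) + B * r powr (- 2 * (1 + \<alpha>)) \<le> (64 + B) * r powr (- 2 * (1 + \<alpha>))"
    if "0 < r" "r < 1" for r
    using that assms by (simp add: distrib_right powr_mono')
  then have small: "lambda1 \<alpha> (Bpunct r :: (real ^ 'n) set) \<le> K * (64 + B) * r powr (- 2 * (1 + \<alpha>))"
    if "0 < r" "r < 1" for r
    using order_trans[OF bound mult_left_mono[of _ _ K]] that \<open>0 < K\<close> by (simp add: mult.assoc)
  have "64 * r powr (- 2) + B * r powr (- 2 * (1 + \<alpha>)) \<le> (64 + B) * r powr (- 2)"
    if "1 \<le> r" for r
    using that assms \<open>0 \<le> B\<close> by (simp add: distrib_right mult_left_mono powr_mono)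
  then have large: "lambda1 \<alpha> (Bpunct r :: (real ^ 'n) set) \<le> K * (64 + B) * r powr (- 2)"
    if "1 \<le> r" for r
    using order_trans[OF bound mult_left_mono[of _ _ K]] that \<open>0 < K\<close> by (simp add: mult.assoc)
  show ?thesis
    using small large \<open>0 < K\<close> \<open>0 \<le> B\<close> by (intro exI[of _ "K * (64 + B)"]) auto
qed

end
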